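(* Let $\nabla$ be a non-flat, torsion-free, real-analytic, geodesically complete affine connection on $\mathbf{R}^2$ which is invariant under the standard linear action of $\mathrm{SL}(2,\mathbf{R})$. Then, for some $k\in\mathbf{R}^*$, $$\nabla_{\partial_x}\partial_x=ky^2E,\quad \nabla_{\partial_x}\partial_y=-kxyE,\quad \nabla_{\partial_y}\partial_y=kx^2E,\qquad E=x\partial_x+y\partial_y.$$ Its parametrized geodesics are either lines through the origin parametrized at constant speed, or conics centered at the origin of special affine curvature $\sqrt[3]{k}$, parametrized at constant speed with respect to special affine arc length.
   Context: Special affine arc length and special affine curvature refer to the invariants of plane curves under the group of area-preserving affine maps $\mathrm{SL}(2,\mathbf{R})\ltimes\mathbf{R}^2$ (for a curve parametrized so that $\det(c',c'')=1$, the parameter is the special affine arc length and the special affine curvature is $\kappa=\det(c'',c''')$). *)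

theory Defs
  imports "HOL-Analysis.Analysis"
begin

text \<open>Points and tangent vectors of R^2 are elements of real^2 (component 1 = x, 2 = y).
An affine connection on R^2 is given by its Christoffel symbols:
G p i j k = Gamma^k_{ij}(p), i.e. nabla_{d_i} d_j = sum_k G p i j k d_k.\<close>

type_synonym christoffel = "real^2 \<Rightarrow> 2 \<Rightarrow> 2 \<Rightarrow> 2 \<Rightarrow> real"

definition chris :: "christoffel \<Rightarrow> real^2 \<Rightarrow> real^2 \<Rightarrow> real^2 \<Rightarrow> real^2" where
  "chris G p u v = (\<chi> k. \<Sum>i\<in>UNIV. \<Sum>j\<in>UNIV. G p i j k * u$i * v$j)"

definition det2 :: "real^2 \<Rightarrow> real^2 \<Rightarrow> real" where
  "det2 u v = u$1 * v$2 - u$2 * v$1"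

definition pd :: "2 \<Rightarrow> (real^2 \<Rightarrow> real) \<Rightarrow> real^2 \<Rightarrow> real" where
  "pd i f p = deriv (\<lambda>t. f (p + t *\<^sub>R axis i 1)) 0"

definition real_analytic2 :: "(real^2 \<Rightarrow> real) \<Rightarrow> bool" where
  "real_analytic2 f \<longleftrightarrow> (\<forall>p. \<exists>r>0. \<exists>a :: nat \<Rightarrow> nat \<Rightarrow> real.
     \<forall>q\<in>ball p r. ((\<lambda>(m,n). a m n * (q$1 - p$1)^m * (q$2 - p$2)^n) has_sum f q) UNIV)"

definition analytic_connection :: "christoffel \<Rightarrow> bool" where
  "analytic_connection G \<longleftrightarrow> (\<forall>i j k. real_analytic2 (\<lambda>p. G p i j k))"

definition torsion_free :: "christoffel \<Rightarrow> bool" where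
  "torsion_free G \<longleftrightarrow> (\<forall>p i j k. G p i j k = G p j i k)"

text \<open>Curvature tensor R(d_i,d_j)d_k = sum_l curv G p i j k l d_l.\<close>
definition curv :: "christoffel \<Rightarrow> real^2 \<Rightarrow> 2 \<Rightarrow> 2 \<Rightarrow> 2 \<Rightarrow> 2 \<Rightarrow> real" where
  "curv G p i j k l =
     pd i (\<lambda>q. G q j k l) p - pd j (\<lambda>q. G q i k l) p
     + (\<Sum>m\<in>UNIV. G p i m l * G p j k m - G p j m l * G p i k m)"

definition flat :: "christoffel \<Rightarrow> bool" where
  "flat G \<longleftrightarrow> (\<forall>p i j k l. curv G p i j k l = 0)"

definition vd :: "(real \<Rightarrow> real^2) \<Rightarrow> real \<Rightarrow> real^2" where
  "vd c t = vector_derivative c (at t)"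

definition geodesic :: "christoffel \<Rightarrow> (real \<Rightarrow> real^2) \<Rightarrow> bool" where
  "geodesic G c \<longleftrightarrow> (\<forall>t. c differentiable at t \<and> vd c differentiable at t) \<and>
     (\<forall>t. vd (vd c) t + chris G (c t) (vd c t) (vd c t) = 0)"

definition geodesically_complete :: "christoffel \<Rightarrow> bool" where
  "geodesically_complete G \<longleftrightarrow> (\<forall>p v. \<exists>c. geodesic G c \<and> c 0 = p \<and> vd c 0 = v)"

definition SL2_invariant :: "christoffel \<Rightarrow> bool" where
  "SL2_invariant G \<longleftrightarrow> (\<forall>A :: real^2^2. det A = 1 \<longrightarrow>
     (\<forall>p u v. chris G (A *v p) (A *v u) (A *v v) = A *v chris G p u v))"

definition sa_arclength_param :: "(real \<Rightarrow> real^2) \<Rightarrow> bool" where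
  "sa_arclength_param g \<longleftrightarrow>
     (\<forall>s. g differentiable at s \<and> vd g differentiable at s \<and> vd (vd g) differentiable at s) \<and>
     (\<forall>s. det2 (vd g s) (vd (vd g) s) = 1)"

definition sa_curvature :: "(real \<Rightarrow> real^2) \<Rightarrow> real \<Rightarrow> real" where
  "sa_curvature g s = det2 (vd (vd g) s) (vd (vd (vd g)) s)"

definition centered_conic :: "(real^2) set \<Rightarrow> bool" where
  "centered_conic C \<longleftrightarrow> (\<exists>a b c d. a * c - b^2 \<noteq> 0 \<and> d \<noteq> 0 \<and>
     C = {p. a * (p$1)^2 + 2 * b * p$1 * p$2 + c * (p$2)^2 = d})"

end

theory Submission
  imports Defs
begin

text \<open>
  The stabilizer
  of the point e1 contains the shears fixing e1, which forces the Christoffel map at e1 into a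
  two-parameter family; transitivity of SL(2) on the punctured plane and the symmetry -1 at the
  origin then give \<open>\<nabla>_u v = a (det(p,u) v + det(p,v) u) + k det(p,u) det(p,v) p\<close> everywhere.
  Along a geodesic the angular momentum \<open>h = det(c,c')\<close> satisfies the Riccati equation
  \<open>h' = -2a h\<^sup>2\<close>, whose solutions with \<open>a h(0) < 0\<close> blow up in finite time, so completeness forces
  \<open>a = 0\<close>; flatness is excluded exactly when \<open>k \<noteq> 0\<close>. With \<open>a = 0\<close>, h is a first integral and
  \<open>c'' = -k h\<^sup>2 c\<close>: for \<open>h = 0\<close> the geodesic is a line through the origin, otherwise a centred
  linear oscillator, whose orbit is a centred conic and which becomes a special affine arc length
  parametrization of curvature \<open>\<root>3 k\<close> after the time change \<open>s = \<root>3 k h t\<close>.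
\<close>

section \<open>Planar linear algebra\<close>

lemma matrix_vector_mult_2:
  "((A::real^2^2) *v x) $ 1 = A$1$1 * x$1 + A$1$2 * x$2"
  "((A::real^2^2) *v x) $ 2 = A$2$1 * x$1 + A$2$2 * x$2"
  by (simp_all add: matrix_vector_mult_def sum_2)

lemma det2_scaleR [simp]: "det2 (\<alpha> *\<^sub>R u) (\<beta> *\<^sub>R v) = \<alpha> * \<beta> * det2 u v"
  by (simp add: det2_def algebra_simps)

lemma det2_uminus [simp]: "det2 (- u) v = - det2 u v" "det2 u (- v) = - det2 u v"
  by (simp_all add: det2_def)

lemma det2_commute: "det2 v u = - det2 u v"
  by (simp add: det2_def)

lemma det2_matrix_vector_mult: "det2 ((A::real^2^2) *v p) (A *v q) = det A * det2 p q"
  by (simp add: det2_def matrix_vector_mult_2 det_2) algebra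

lemma SL2_surj:
  assumes "det (A::real^2^2) = 1"
  obtains u where "A *v u = w"
proof
  let ?u = "vector [A$2$2 * w$1 - A$1$2 * w$2, A$1$1 * w$2 - A$2$1 * w$1] :: real^2"
  show "A *v ?u = w"
    using assms by (simp add: vec_eq_iff forall_2 matrix_vector_mult_2 det_2) algebra
qed

lemma SL2_transitive_punctured_plane:
  assumes "p \<noteq> 0"
  obtains A :: "real^2^2" where "det A = 1" and "A *v axis 1 1 = p"
proof
  define n where "n = (p$1)^2 + (p$2)^2"
  have "n \<noteq> 0"
    using assms by (simp add: n_def vec_eq_iff forall_2)
  let ?A = "vector [vector [p$1, - p$2 / n], vector [p$2, p$1 / n]] :: real^2^2"
  show "det ?A = 1"
    using \<open>n \<noteq> 0\<close> by (simp add: det_2 field_simps) (simp add: n_def power2_eq_square)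
  show "?A *v axis 1 1 = p"
    by (simp add: vec_eq_iff forall_2 matrix_vector_mult_2 axis_def)
qed

section \<open>SL(2)-invariant connections\<close>

lemma chris_2:
  "chris G p u v $ l = G p 1 1 l * u$1 * v$1 + G p 1 2 l * u$1 * v$2
     + G p 2 1 l * u$2 * v$1 + G p 2 2 l * u$2 * v$2"
  by (simp add: chris_def sum_2)

lemma chris_axis: "chris G p (axis i 1) (axis j 1) $ l = G p i j l"
  using exhaust_2[of i] exhaust_2[of j] by (auto simp: chris_2 axis_def)

lemma chris_uminus: "chris G p (- u) (- v) = chris G p u v"
  by (simp add: vec_eq_iff forall_2 chris_2)

definition sl2_chris :: "real \<Rightarrow> real \<Rightarrow> real^2 \<Rightarrow> real^2 \<Rightarrow> real^2 \<Rightarrow> real^2" where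
  "sl2_chris a k p u v =
     a *\<^sub>R (det2 p u *\<^sub>R v + det2 p v *\<^sub>R u) + (k * det2 p u * det2 p v) *\<^sub>R p"

lemma sl2_chris_nth:
  "sl2_chris a k p u v $ i = a * (det2 p u * v$i + det2 p v * u$i) + k * det2 p u * det2 p v * p$i"
  by (simp add: sl2_chris_def)

lemma sl2_chris_SL2_equivariant:
  assumes "det (A::real^2^2) = 1"
  shows "sl2_chris a k (A *v p) (A *v u) (A *v v) = A *v sl2_chris a k p u v"
  by (simp add: sl2_chris_def det2_matrix_vector_mult assms algebra_simps)

lemma SL2_invariant_chris_origin:
  assumes "SL2_invariant G"
  shows "chris G 0 u v = 0"
proof -
  define M :: "real^2^2" where "M = vector [vector [-1, 0], vector [0, -1]]"
  have "det M = 1"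
    by (simp add: M_def det_2)
  moreover have M: "M *v x = - x" for x
    by (simp add: vec_eq_iff forall_2 matrix_vector_mult_2 M_def)
  ultimately have "chris G (M *v 0) (M *v u) (M *v v) = M *v chris G 0 u v"
    using assms unfolding SL2_invariant_def by blast
  then have "chris G 0 u v = - chris G 0 u v"
    by (simp add: M chris_uminus)
  then show ?thesis
    by (simp add: vec_eq_iff forall_2)
qed

lemma SL2_invariant_chris_axis1:
  assumes "SL2_invariant G" and "torsion_free G"
  shows "chris G (axis 1 1) u v = sl2_chris (G (axis 1 1) 1 2 1) (G (axis 1 1) 2 2 1) (axis 1 1) u v"
proof -
  define e1 :: "real^2" where "e1 = axis 1 1"
  define e2 :: "real^2" where "e2 = axis 2 1"
  have e: "e1$1 = 1" "e1$2 = 0" "e2$1 = 0" "e2$2 = 1"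
    by (simp_all add: e1_def e2_def axis_def)
  define N :: "real^2^2" where "N = vector [vector [1, 1], vector [0, 1]]"
  have N: "N$1$1 = 1" "N$1$2 = 1" "N$2$1 = 0" "N$2$2 = 1"
    by (simp_all add: N_def)
  have "det N = 1"
    by (simp add: N_def det_2)
  then have inv: "chris G (N *v p) (N *v u) (N *v v) = N *v chris G p u v" for p u v
    using assms(1) unfolding SL2_invariant_def by blast
  have "N *v e1 = e1"
    by (simp add: vec_eq_iff forall_2 matrix_vector_mult_2 N e)
  then have "chris G e1 e1 e1 = N *v chris G e1 e1 e1"
      and "chris G e1 e1 (N *v e2) = N *v chris G e1 e1 e2"
      and "chris G e1 (N *v e2) (N *v e2) = N *v chris G e1 e2 e2"
    using inv[of e1 e1 e1] inv[of e1 e1 e2] inv[of e1 e2 e2] by simp_all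
  moreover have sym: "G p 2 1 l = G p 1 2 l" for p l
    using assms(2) unfolding torsion_free_def by metis
  ultimately have "G e1 1 1 1 = 0" "G e1 1 1 2 = 0" "G e1 1 2 2 = 0" "G e1 2 2 2 = 2 * G e1 1 2 1"
    by (simp_all add: vec_eq_iff forall_2 chris_2 matrix_vector_mult_2 N e sym)
  then show ?thesis
    unfolding e1_def[symmetric]
    by (simp add: vec_eq_iff forall_2 chris_2 sl2_chris_nth det2_def e sym algebra_simps)
qed

theorem SL2_invariant_torsion_free_chris:
  assumes "SL2_invariant G" and "torsion_free G"
  obtains a k where "chris G = sl2_chris a k"
proof
  define a where "a = G (axis 1 1) 1 2 1"
  define k where "k = G (axis 1 1) 2 2 1"
  have "chris G p u v = sl2_chris a k p u v" for p u v
  proof (cases "p = 0")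
    case True
    then show ?thesis
      using SL2_invariant_chris_origin[OF assms(1)] by (simp add: sl2_chris_def det2_def)
  next
    case False
    then obtain A :: "real^2^2" where A: "det A = 1" "A *v axis 1 1 = p"
      by (rule SL2_transitive_punctured_plane)
    obtain u' v' where uv: "A *v u' = u" "A *v v' = v"
      using SL2_surj[OF A(1)] by metis
    have "chris G p u v = A *v chris G (axis 1 1) u' v'"
      using assms(1) A uv unfolding SL2_invariant_def by blast
    also have "\<dots> = A *v sl2_chris a k (axis 1 1) u' v'"
      unfolding a_def k_def using SL2_invariant_chris_axis1[OF assms] by simp
    also have "\<dots> = sl2_chris a k p u v"
      by (simp flip: sl2_chris_SL2_equivariant[OF A(1)] add: A uv)
    finally show ?thesis .
  qed
  then show "chris G = sl2_chris a k"
    by blast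
qed

section \<open>Geodesics\<close>

lemma has_real_derivative_vec_nth:
  fixes f :: "real \<Rightarrow> real^'n"
  assumes "(f has_vector_derivative f') (at t)"
  shows "((\<lambda>t. f t $ i) has_real_derivative f' $ i) (at t)"
  using bounded_linear.has_vector_derivative[OF bounded_linear_vec_nth assms]
  by (simp add: has_real_derivative_iff_has_vector_derivative)

lemma has_vector_derivative_zero_imp_const:
  fixes f :: "real \<Rightarrow> 'a::real_normed_vector"
  assumes "\<And>t. (f has_vector_derivative 0) (at t)"
  shows "f t = f s"
  using has_vector_derivative_zero_constant[of UNIV f] assms by (metis UNIV_I convex_UNIV)

lemma geodesicD:
  assumes "geodesic G c"
  shows "(c has_vector_derivative vd c t) (at t)"
    and "(vd c has_vector_derivative - chris G (c t) (vd c t) (vd c t)) (at t)"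
proof -
  have "c differentiable at t" "vd c differentiable at t"
    and "vd (vd c) t = - chris G (c t) (vd c t) (vd c t)"
    using assms unfolding geodesic_def by (auto simp: eq_neg_iff_add_eq_0)
  then show "(c has_vector_derivative vd c t) (at t)"
      and "(vd c has_vector_derivative - chris G (c t) (vd c t) (vd c t)) (at t)"
    unfolding vd_def by (auto simp: vector_derivative_works)
qed

text \<open>The \<open>k\<close>-term of the Christoffel map is radial and does not affect \<open>det(c,c')\<close>.\<close>
lemma geodesic_sl2_chris_angular_momentum:
  assumes "chris G = sl2_chris a k" and "geodesic G c"
  shows "((\<lambda>t. det2 (c t) (vd c t)) has_real_derivative - 2 * a * (det2 (c t) (vd c t))\<^sup>2) (at t)"
proof -
  note c' = has_real_derivative_vec_nth[OF geodesicD(1)[OF assms(2)]]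
  note c'' = has_real_derivative_vec_nth[OF geodesicD(2)[OF assms(2)]]
  have "((\<lambda>t. c t$1 * vd c t$2 - c t$2 * vd c t$1) has_real_derivative
      c t$1 * (- chris G (c t) (vd c t) (vd c t))$2 + vd c t$1 * vd c t$2
      - (c t$2 * (- chris G (c t) (vd c t) (vd c t))$1 + vd c t$2 * vd c t$1)) (at t)"
    by (intro DERIV_diff DERIV_mult' c' c'')
  then show ?thesis
    by (simp add: assms(1) sl2_chris_nth det2_def power2_eq_square algebra_simps)
qed

text \<open>Solutions of \<open>h' = b h\<^sup>2\<close> with \<open>b h(0) > 0\<close> reach infinity at \<open>t = 1/(b h(0))\<close>.\<close>
lemma riccati_no_global_solution:
  fixes h :: "real \<Rightarrow> real"
  assumes deriv: "\<And>t. (h has_real_derivative b * (h t)\<^sup>2) (at t)" and pos: "b * h 0 > 0"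
  shows False
proof -
  define T where "T = 1 / (b * h 0)"
  have "T > 0"
    using pos by (simp add: T_def)
  have "b * h 0 \<le> b * h t" if "0 \<le> t" for t
  proof (rule deriv_nonneg_imp_mono[where g = "\<lambda>s. b * h s" and g' = "\<lambda>s. b * (b * (h s)\<^sup>2)"])
    show "((\<lambda>s. b * h s) has_real_derivative b * (b * (h x)\<^sup>2)) (at x)" for x
      by (rule DERIV_cmult[OF deriv])
    show "0 \<le> b * (b * (h x)\<^sup>2)" for x
      by (simp add: mult.assoc[symmetric])
  qed (fact that)
  then have nonzero: "h t \<noteq> 0" if "0 \<le> t" for t
    using pos that by fastforce
  define w where "w t = inverse (h t) + b * t" for t
  have w': "(w has_real_derivative 0) (at t)" if "0 \<le> t" for t
  proof -
    have "(w has_real_derivative - (b * (h t)\<^sup>2 * inverse (h t ^ Suc (Suc 0))) + b * 1) (at t)"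
      unfolding w_def by (intro DERIV_add DERIV_inverse_fun deriv nonzero that DERIV_cmult DERIV_ident)
    then show ?thesis
      using nonzero[OF that] by (simp add: field_simps power2_eq_square)
  qed
  have "w T = w 0"
  proof (rule DERIV_isconst_end[OF \<open>T > 0\<close>])
    show "continuous_on {0..T} w"
      by (rule continuous_at_imp_continuous_on) (metis DERIV_isCont w' atLeastAtMost_iff)
  qed (use w' in auto)
  moreover have "b * T = inverse (h 0)"
    using pos by (auto simp: T_def field_simps)
  ultimately have "inverse (h T) = 0"
    by (simp add: w_def)
  then show False
    using nonzero[of T] \<open>T > 0\<close> by simp
qed

lemma geodesically_complete_sl2_chris:
  assumes "chris G = sl2_chris a k" and "geodesically_complete G"
  shows "a = 0"
proof (rule ccontr)
  assume "a \<noteq> 0"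
  obtain c where c: "geodesic G c" "c 0 = axis 1 1" "vd c 0 = (- a) *\<^sub>R axis 2 1"
    using assms(2) unfolding geodesically_complete_def by blast
  show False
  proof (rule riccati_no_global_solution)
    show "((\<lambda>t. det2 (c t) (vd c t)) has_real_derivative - 2 * a * (det2 (c t) (vd c t))\<^sup>2) (at t)" for t
      by (rule geodesic_sl2_chris_angular_momentum[OF assms(1) c(1)])
    show "- 2 * a * det2 (c 0) (vd c 0) > 0"
      using \<open>a \<noteq> 0\<close> by (simp add: c det2_def axis_def zero_less_mult_iff) linarith
  qed
qed

lemma geodesic_sl2_chris_0:
  assumes "chris G = sl2_chris 0 k" and "geodesic G c"
  shows "det2 (c t) (vd c t) = det2 (c 0) (vd c 0)"
    and "(vd c has_vector_derivative (- (k * (det2 (c 0) (vd c 0))\<^sup>2)) *\<^sub>R c t) (at t)"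
proof -
  show h: "det2 (c t) (vd c t) = det2 (c 0) (vd c 0)" for t
    using DERIV_isconst_all[of "\<lambda>t. det2 (c t) (vd c t)" t 0]
      geodesic_sl2_chris_angular_momentum[OF assms] by simp
  show "(vd c has_vector_derivative (- (k * (det2 (c 0) (vd c 0))\<^sup>2)) *\<^sub>R c t) (at t)"
    using geodesicD(2)[OF assms(2), of t] h[of t]
    by (simp add: assms(1) sl2_chris_def power2_eq_square mult.assoc)
qed

section \<open>The centred linear oscillator\<close>

lemma uniform_motion:
  fixes c :: "real \<Rightarrow> 'a::real_normed_vector"
  assumes "\<And>t. (c has_vector_derivative c' t) (at t)" and "\<And>t. (c' has_vector_derivative 0) (at t)"
  shows "c t = c 0 + t *\<^sub>R c' 0"
proof -
  have "((\<lambda>t. c t - t *\<^sub>R c' 0) has_vector_derivative 0) (at t)" for t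
    using has_vector_derivative_zero_imp_const[OF assms(2), of t 0]
    by (auto intro!: derivative_eq_intros assms(1))
  from has_vector_derivative_zero_imp_const[OF this, of t 0] show ?thesis
    by (simp add: algebra_simps)
qed

lemma oscillator_quadratic_invariant:
  fixes c :: "real \<Rightarrow> real^2"
  assumes "\<And>t. (c has_vector_derivative c' t) (at t)"
    and "\<And>t. (c' has_vector_derivative (- w) *\<^sub>R c t) (at t)"
  shows "c' t $ i * c' t $ j + w * (c t $ i * c t $ j) = c' 0 $ i * c' 0 $ j + w * (c 0 $ i * c 0 $ j)"
proof -
  note d = has_real_derivative_vec_nth[OF assms(1)] has_real_derivative_vec_nth[OF assms(2)]
  have "((\<lambda>t. c' t $ i * c' t $ j + w * (c t $ i * c t $ j)) has_real_derivative 0) (at t)" for t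
  proof -
    have "((\<lambda>t. c' t $ i * c' t $ j + w * (c t $ i * c t $ j)) has_real_derivative
        c' t $ i * ((- w) *\<^sub>R c t) $ j + ((- w) *\<^sub>R c t) $ i * c' t $ j
        + w * (c t $ i * c' t $ j + c' t $ i * c t $ j)) (at t)"
      by (intro DERIV_add DERIV_mult' DERIV_cmult d)
    then show ?thesis
      by (simp add: algebra_simps)
  qed
  then show ?thesis
    by (rule DERIV_isconst_all[rule_format])
qed

lemma oscillator_orbit_centered_conic:
  fixes c :: "real \<Rightarrow> real^2"
  assumes "\<And>t. (c has_vector_derivative c' t) (at t)"
    and "\<And>t. (c' has_vector_derivative (- w) *\<^sub>R c t) (at t)"
    and h: "\<And>t. det2 (c t) (c' t) = h" and "w \<noteq> 0" and "h \<noteq> 0"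
  shows "\<exists>C. centered_conic C \<and> range c \<subseteq> C"
proof -
  define P where "P i j = c' 0 $ i * c' 0 $ j + w * (c 0 $ i * c 0 $ j)" for i j
  note P = oscillator_quadratic_invariant[OF assms(1,2), folded P_def]
  have conic: "P 2 2 * (c t$1)\<^sup>2 + 2 * (- P 1 2) * c t$1 * c t$2 + P 1 1 * (c t$2)\<^sup>2 = h\<^sup>2" for t
  proof -
    have "P 2 2 * (c t$1)\<^sup>2 + 2 * (- P 1 2) * c t$1 * c t$2 + P 1 1 * (c t$2)\<^sup>2
        = (det2 (c t) (c' t))\<^sup>2"
      unfolding P[of t 1 1, symmetric] P[of t 1 2, symmetric] P[of t 2 2, symmetric]
      by (simp add: det2_def power2_eq_square algebra_simps)
    then show ?thesis
      by (simp add: h)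
  qed
  have "P 2 2 * P 1 1 - (- P 1 2)\<^sup>2 = w * (det2 (c 0) (c' 0))\<^sup>2"
    by (simp add: P_def det2_def power2_eq_square algebra_simps)
  then have "P 2 2 * P 1 1 - (- P 1 2)\<^sup>2 = w * h\<^sup>2"
    by (simp add: h)
  then have "centered_conic
      {p. P 2 2 * (p$1)\<^sup>2 + 2 * (- P 1 2) * p$1 * p$2 + P 1 1 * (p$2)\<^sup>2 = h\<^sup>2}"
    unfolding centered_conic_def using assms(4,5)
    by (intro exI[of _ "P 2 2"] exI[of _ "- P 1 2"] exI[of _ "P 1 1"] exI[of _ "h\<^sup>2"]) simp
  moreover have "range c \<subseteq> {p. P 2 2 * (p$1)\<^sup>2 + 2 * (- P 1 2) * p$1 * p$2 + P 1 1 * (p$2)\<^sup>2 = h\<^sup>2}"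
    using conic by auto
  ultimately show ?thesis
    by blast
qed

lemma vd_rescale:
  fixes f :: "real \<Rightarrow> real^2"
  assumes "\<And>x. (f has_vector_derivative f' x) (at x)" and "\<mu> \<noteq> 0"
  shows "((\<lambda>s. f (s / \<mu>)) has_vector_derivative (1 / \<mu>) *\<^sub>R f' (s / \<mu>)) (at s)"
    and "vd (\<lambda>s. f (s / \<mu>)) = (\<lambda>s. (1 / \<mu>) *\<^sub>R f' (s / \<mu>))"
proof -
  have "((\<lambda>s. s / \<mu>) has_vector_derivative 1 / \<mu>) (at s)" for s
    using assms(2) by (auto intro!: derivative_eq_intros simp flip: has_real_derivative_iff_has_vector_derivative)
  from vector_diff_chain_at[OF this assms(1)]
  show D: "((\<lambda>s. f (s / \<mu>)) has_vector_derivative (1 / \<mu>) *\<^sub>R f' (s / \<mu>)) (at s)" for s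
    by (simp add: o_def)
  show "vd (\<lambda>s. f (s / \<mu>)) = (\<lambda>s. (1 / \<mu>) *\<^sub>R f' (s / \<mu>))"
    by (rule ext) (simp add: vd_def vector_derivative_at[OF D])
qed

text \<open>
  With \<open>w = k h\<^sup>2\<close> and \<open>\<mu> = \<root>3 k h\<close>, the rescaled curve satisfies \<open>g'' = -\<root>3 k g\<close>, and
  \<open>det(g',g'') = w h/\<mu>\<^sup>3 = 1\<close>, \<open>det(g'',g''') = w\<^sup>2 h/\<mu>\<^sup>5 = \<root>3 k\<close>.
\<close>
lemma oscillator_sa_reparametrization:
  fixes c :: "real \<Rightarrow> real^2"
  assumes c': "\<And>t. (c has_vector_derivative vd c t) (at t)"
    and c'': "\<And>t. (vd c has_vector_derivative (- (k * h\<^sup>2)) *\<^sub>R c t) (at t)"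
    and h: "\<And>t. det2 (c t) (vd c t) = h" and "k \<noteq> 0" and "h \<noteq> 0"
  shows "\<exists>g \<mu>. \<mu> \<noteq> 0 \<and> sa_arclength_param g \<and> (\<forall>s. sa_curvature g s = root 3 k)
           \<and> (\<forall>t. c t = g (\<mu> * t))"
proof (intro exI conjI allI)
  define r where "r = root 3 k"
  have "r ^ 3 = k"
    by (simp add: r_def odd_real_root_pow)
  then have "r \<noteq> 0"
    using \<open>k \<noteq> 0\<close> by auto
  define \<mu> where "\<mu> = r * h"
  show "\<mu> \<noteq> 0"
    using \<open>r \<noteq> 0\<close> \<open>h \<noteq> 0\<close> by (simp add: \<mu>_def)
  define g where "g s = c (s / \<mu>)" for s
  have w: "k * h\<^sup>2 / \<mu>\<^sup>2 = r" "k * h\<^sup>2 / \<mu> ^ 3 = 1 / h"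
    using \<open>r \<noteq> 0\<close> \<open>h \<noteq> 0\<close> unfolding \<mu>_def \<open>r ^ 3 = k\<close>[symmetric]
    by (simp_all add: power2_eq_square power3_eq_cube)
  have D1: "((\<lambda>x. (1 / \<mu>) *\<^sub>R vd c x) has_vector_derivative
      (1 / \<mu>) *\<^sub>R ((- (k * h\<^sup>2)) *\<^sub>R c x)) (at x)" for x
    by (intro bounded_linear.has_vector_derivative[OF bounded_linear_scaleR_right] c'')
  have D2: "((\<lambda>x. (1 / \<mu>) *\<^sub>R ((1 / \<mu>) *\<^sub>R ((- (k * h\<^sup>2)) *\<^sub>R c x))) has_vector_derivative
      (1 / \<mu>) *\<^sub>R ((1 / \<mu>) *\<^sub>R ((- (k * h\<^sup>2)) *\<^sub>R vd c x))) (at x)" for x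
    by (intro bounded_linear.has_vector_derivative[OF bounded_linear_scaleR_right] c')
  note g' = vd_rescale[OF c' \<open>\<mu> \<noteq> 0\<close>, folded g_def]
  note g'' = vd_rescale[OF D1 \<open>\<mu> \<noteq> 0\<close>]
  note g''' = vd_rescale[OF D2 \<open>\<mu> \<noteq> 0\<close>]
  have h': "det2 (vd c x) (c x) = - h" for x
    using h[of x] det2_commute by metis
  show "sa_arclength_param g"
    unfolding sa_arclength_param_def
  proof (intro conjI allI)
    fix s
    show "g differentiable at s" "vd g differentiable at s" "vd (vd g) differentiable at s"
      unfolding g'(2) g''(2) using g'(1) g''(1) g'''(1) by (auto intro: differentiableI_vector)
    have "det2 (vd g s) (vd (vd g) s) = k * h\<^sup>2 / \<mu> ^ 3 * h"
      unfolding g'(2) g''(2) by (simp add: h' power3_eq_cube)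
    then show "det2 (vd g s) (vd (vd g) s) = 1"
      using w(2) \<open>h \<noteq> 0\<close> by simp
  qed
  show "sa_curvature g s = root 3 k" for s
  proof -
    have "sa_curvature g s = k * h\<^sup>2 / \<mu>\<^sup>2 * (k * h\<^sup>2 / \<mu> ^ 3) * h"
      unfolding sa_curvature_def g'(2) g''(2) g'''(2)
      by (simp add: h power2_eq_square power3_eq_cube)
    then show ?thesis
      using w \<open>h \<noteq> 0\<close> by (simp add: r_def)
  qed
  show "c t = g (\<mu> * t)" for t
    using \<open>\<mu> \<noteq> 0\<close> by (simp add: g_def)
qed

theorem geodesic_sl2_chris_0_classification:
  assumes "chris G = sl2_chris 0 k" and "k \<noteq> 0" and "geodesic G c"
  shows "(\<exists>p v. (\<forall>t. c t = p + t *\<^sub>R v) \<and> det2 p v = 0) \<or>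
        ((\<exists>C. centered_conic C \<and> range c \<subseteq> C) \<and>
         (\<exists>g \<mu>. \<mu> \<noteq> 0 \<and> sa_arclength_param g \<and> (\<forall>s. sa_curvature g s = root 3 k) \<and>
                (\<forall>t. c t = g (\<mu> * t))))"
proof -
  define h where "h = det2 (c 0) (vd c 0)"
  note c' = geodesicD(1)[OF assms(3)]
  note h = geodesic_sl2_chris_0(1)[OF assms(1,3), folded h_def]
  note c'' = geodesic_sl2_chris_0(2)[OF assms(1,3), folded h_def]
  show ?thesis
  proof (cases "h = 0")
    case True
    have "(vd c has_vector_derivative 0) (at t)" for t
      using c''[of t] True by simp
    then have "c t = c 0 + t *\<^sub>R vd c 0" for t
      by (rule uniform_motion[OF c'])
    moreover have "det2 (c 0) (vd c 0) = 0"
      using True by (simp add: h_def)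
    ultimately show ?thesis
      by (intro disjI1 exI conjI allI)
  next
    case False
    have "k * h\<^sup>2 \<noteq> 0"
      using False \<open>k \<noteq> 0\<close> by simp
    from oscillator_orbit_centered_conic[OF c' c'' h this False]
      oscillator_sa_reparametrization[OF c' c'' h \<open>k \<noteq> 0\<close> False]
    show ?thesis
      by (intro disjI2 conjI)
  qed
qed

theorem proposition8p1:
  fixes G :: christoffel
  assumes "\<not> flat G"
    and "torsion_free G"
    and "analytic_connection G"
    and "geodesically_complete G"
    and "SL2_invariant G"
  shows "\<exists>k::real. k \<noteq> 0 \<and>
     (\<forall>p l. G p 1 1 l = k * (p$2)^2 * p$l
          \<and> G p 1 2 l = - k * p$1 * p$2 * p$l
          \<and> G p 2 2 l = k * (p$1)^2 * p$l) \<and>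
     (\<forall>c. geodesic G c \<longrightarrow>
        (\<exists>p v. (\<forall>t. c t = p + t *\<^sub>R v) \<and> det2 p v = 0) \<or>
        ((\<exists>C. centered_conic C \<and> range c \<subseteq> C) \<and>
         (\<exists>g \<mu>. \<mu> \<noteq> 0 \<and> sa_arclength_param g \<and> (\<forall>s. sa_curvature g s = root 3 k) \<and>
                (\<forall>t. c t = g (\<mu> * t)))))"
proof -
  obtain a k where S: "chris G = sl2_chris a k"
    using SL2_invariant_torsion_free_chris[OF assms(5,2)] .
  have "a = 0"
    using geodesically_complete_sl2_chris[OF S assms(4)] .
  have G: "G p i j l = k * det2 p (axis i 1) * det2 p (axis j 1) * p$l" for p i j l
    using chris_axis[of G p i j l] by (simp add: S \<open>a = 0\<close> sl2_chris_nth)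
  have "k \<noteq> 0"
  proof
    assume "k = 0"
    then have "flat G"
      unfolding flat_def curv_def pd_def by (simp add: G)
    with assms(1) show False ..
  qed
  moreover have "\<forall>p l. G p 1 1 l = k * (p$2)^2 * p$l
          \<and> G p 1 2 l = - k * p$1 * p$2 * p$l
          \<and> G p 2 2 l = k * (p$1)^2 * p$l"
    by (simp add: G det2_def axis_def power2_eq_square)
  ultimately show ?thesis
    using geodesic_sl2_chris_0_classification[of G k] S \<open>a = 0\<close> by blast
qed

end
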